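(* Let $\star\in\{\boxtimes,\circ,\times\}$, $k$ a positive integer, and $G,H$ graphs. Then $m_k(G\star H)$ is $\ast$-well-behaved w.r.t. $G$ and $H$ if and only if there exist positive integers $k_G,k_H$ with $k_Gk_H=k$ such that $m_k(G\star H)=2\,m_{k_G}(G)\,m_{k_H}(H)$.
   Context: Graphs are finite, simple, undirected, with non-empty vertex set. For a positive integer $k$, a $k$-matching of $G=(V,E)$ is a set $M\subseteq E$ such that every vertex is incident to either $0$ or exactly $k$ edges of $M$ (the empty set is one); $m_k(G)$ is the maximum size of a $k$-matching of $G$. Products on $V_G\times V_H$: in $G\boxtimes H$, $(g,h)\sim(g',h')$ iff (i) $\{g,g'\}\in E_G$, $h=h'$; or (ii) $g=g'$, $\{h,h'\}\in E_H$; or (iii) $\{g,g'\}\in E_G$ and $\{h,h'\}\in E_H$; in $G\times H$ iff (iii); in $G\circ H$ iff $\{g,g'\}\in E_G$ or (ii). For $M_G\subseteq E_G$, $M_H\subseteq E_H$ define $F_{\ast}(M_G,M_H)=\{\{(g,h),(g',h')\}:\{g,g'\}\in M_G,\{h,h'\}\in M_H\}$. $m_k(G\star H)$ is $\ast$-well-behaved w.r.t. $G$ and $H$ if $m_k(G\star H)=|F_{\ast}(M_G,M_H)|$ for some $M_G\subseteq E_G$, $M_H\subseteq E_H$ for which $F_{\ast}(M_G,M_H)$ is a $k$-matching of $G\star H$. *)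

theory Defs
  imports Main
begin

definition graph :: "'a set \<Rightarrow> 'a set set \<Rightarrow> bool" where
  "graph V E \<longleftrightarrow> finite V \<and> V \<noteq> {} \<and>
     E \<subseteq> {{u, v} | u v. u \<in> V \<and> v \<in> V \<and> u \<noteq> v}"

definition k_matching :: "'a set \<Rightarrow> 'a set set \<Rightarrow> nat \<Rightarrow> 'a set set \<Rightarrow> bool" where
  "k_matching V E k M \<longleftrightarrow> M \<subseteq> E \<and>
     (\<forall>v\<in>V. card {e\<in>M. v \<in> e} = 0 \<or> card {e\<in>M. v \<in> e} = k)"

definition m_k :: "'a set \<Rightarrow> 'a set set \<Rightarrow> nat \<Rightarrow> nat" where
  "m_k V E k = Max (card ` {M. k_matching V E k M})"

datatype prod_kind = Strong | Lexicographic | Direct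

definition prod_edges :: "prod_kind \<Rightarrow> 'a set \<Rightarrow> 'a set set \<Rightarrow> 'b set \<Rightarrow> 'b set set
    \<Rightarrow> ('a \<times> 'b) set set" where
  "prod_edges p VG EG VH EH =
    {{(g, h), (g', h')} | g g' h h'. g \<in> VG \<and> g' \<in> VG \<and> h \<in> VH \<and> h' \<in> VH \<and>
      (case p of
         Strong \<Rightarrow> ({g, g'} \<in> EG \<and> h = h') \<or> (g = g' \<and> {h, h'} \<in> EH)
                   \<or> ({g, g'} \<in> EG \<and> {h, h'} \<in> EH)
       | Lexicographic \<Rightarrow> {g, g'} \<in> EG \<or> (g = g' \<and> {h, h'} \<in> EH)
       | Direct \<Rightarrow> {g, g'} \<in> EG \<and> {h, h'} \<in> EH)}"

definition F_ast :: "'a set set \<Rightarrow> 'b set set \<Rightarrow> ('a \<times> 'b) set set" where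
  "F_ast MG MH = {{(g, h), (g', h')} | g g' h h'. {g, g'} \<in> MG \<and> {h, h'} \<in> MH}"

definition well_behaved :: "prod_kind \<Rightarrow> nat \<Rightarrow> 'a set \<Rightarrow> 'a set set \<Rightarrow> 'b set \<Rightarrow> 'b set set \<Rightarrow> bool" where
  "well_behaved p k VG EG VH EH \<longleftrightarrow>
    (\<exists>MG MH. MG \<subseteq> EG \<and> MH \<subseteq> EH \<and>
       k_matching (VG \<times> VH) (prod_edges p VG EG VH EH) k (F_ast MG MH) \<and>
       m_k (VG \<times> VH) (prod_edges p VG EG VH EH) k = card (F_ast MG MH))"

end

theory Submission
  imports Defs
begin

text \<open>For each pair of edges e = {a, b} of G and f = {c, d} of H, F_ast contributes exactly the two
  edges {(a, c), (b, d)} and {(a, d), (b, c)}, so |F_ast MG MH| = 2 |MG| |MH| and the degree of (g, h)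
  in F_ast MG MH is the product of the degrees of g in MG and of h in MH. Consequently F_ast of a
  kG-matching and a kH-matching is a kG kH-matching of every product, which gives
  m_k(G \<star> H) \<ge> 2 m_kG(G) m_kH(H) whenever kG kH = k. Conversely, if F_ast MG MH is a non-empty
  k-matching, the multiplicativity of degrees forces MG and MH to be kG- and kH-matchings with
  kG kH = k, so its size is at most 2 m_kG(G) m_kH(H).\<close>

definition doubletons :: "'a set set \<Rightarrow> bool" where
  "doubletons M \<longleftrightarrow> (\<forall>e\<in>M. \<exists>a b. a \<noteq> b \<and> e = {a, b})"

definition degree :: "'a set set \<Rightarrow> 'a \<Rightarrow> nat" where
  "degree M v = card {e\<in>M. v \<in> e}"

definition edge_prod :: "'a set \<Rightarrow> 'b set \<Rightarrow> ('a \<times> 'b) set set" where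
  "edge_prod e f = {{(g, h), (g', h')} | g g' h h'. {g, g'} = e \<and> {h, h'} = f}"

lemma doubletonsE:
  assumes "doubletons M" "e \<in> M"
  obtains a b where "e = {a, b}" "a \<noteq> b"
  using assms unfolding doubletons_def by auto

lemma doubletons_other_endpoint:
  assumes "doubletons M" "e \<in> M" "v \<in> e"
  obtains w where "e = {v, w}" "v \<noteq> w"
proof -
  obtain a b where ab: "e = {a, b}" "a \<noteq> b" using assms(1,2) by (rule doubletonsE)
  show thesis
  proof (cases "v = a")
    case True
    then show ?thesis using that ab by blast
  next
    case False
    then have "v = b" using ab assms(3) by blast
    then show ?thesis using that[of a] ab by (simp add: insert_commute)
  qed
qed

lemma k_matching_iff_degree:
  "k_matching V E k M \<longleftrightarrow> M \<subseteq> E \<and> (\<forall>v\<in>V. degree M v = 0 \<or> degree M v = k)"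
  unfolding k_matching_def degree_def ..

lemma F_ast_eq_UN_edge_prod: "F_ast MG MH = (\<Union>(e, f)\<in>MG \<times> MH. edge_prod e f)"
  unfolding F_ast_def edge_prod_def by blast

lemma edge_prod_projections: "x \<in> edge_prod e f \<Longrightarrow> fst ` x = e \<and> snd ` x = f"
  unfolding edge_prod_def by auto

lemma edge_prod_member: "x \<in> edge_prod e f \<Longrightarrow> (g, h) \<in> x \<Longrightarrow> g \<in> e \<and> h \<in> f"
  unfolding edge_prod_def by auto

lemma edge_prod_doubletons:
  assumes "a \<noteq> b" "c \<noteq> d"
  shows "edge_prod {a, b} {c, d} = {{(a, c), (b, d)}, {(a, d), (b, c)}}"
  using assms unfolding edge_prod_def by (auto simp: doubleton_eq_iff insert_commute)

lemma card_edge_prod: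
  assumes "a \<noteq> b" "c \<noteq> d"
  shows "card (edge_prod {a, b} {c, d}) = 2"
  using assms by (auto simp: edge_prod_doubletons doubleton_eq_iff)

lemma card_edge_prod_containing:
  assumes "g \<noteq> a" "h \<noteq> c"
  shows "card {x\<in>edge_prod {g, a} {h, c}. (g, h) \<in> x} = 1"
proof -
  have "{x\<in>edge_prod {g, a} {h, c}. (g, h) \<in> x} = {{(g, h), (a, c)}}"
    using assms by (auto simp: edge_prod_doubletons)
  then show ?thesis by simp
qed

lemma finite_edge_prod:
  assumes "doubletons MG" "doubletons MH" "e \<in> MG" "f \<in> MH"
  shows "finite (edge_prod e f)"
proof -
  obtain a b c d where "e = {a, b}" "a \<noteq> b" "f = {c, d}" "c \<noteq> d"
    using assms by (meson doubletonsE)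
  then show ?thesis by (simp add: edge_prod_doubletons)
qed

lemma card_F_ast_filter:
  assumes "finite MG" "finite MH" "doubletons MG" "doubletons MH"
  shows "card {x\<in>F_ast MG MH. P x} = (\<Sum>(e, f)\<in>MG \<times> MH. card {x\<in>edge_prod e f. P x})"
proof -
  have "{x\<in>F_ast MG MH. P x} = (\<Union>(e, f)\<in>MG \<times> MH. {x\<in>edge_prod e f. P x})"
    unfolding F_ast_eq_UN_edge_prod by blast
  also have "card \<dots> = (\<Sum>(e, f)\<in>MG \<times> MH. card {x\<in>edge_prod e f. P x})"
  proof (subst card_UN_disjoint)
    show "\<forall>i\<in>MG \<times> MH. \<forall>j\<in>MG \<times> MH. i \<noteq> j \<longrightarrow>
        (case i of (e, f) \<Rightarrow> {x\<in>edge_prod e f. P x}) \<inter> (case j of (e, f) \<Rightarrow> {x\<in>edge_prod e f. P x}) = {}"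
      by (fastforce dest: edge_prod_projections)
  qed (use assms finite_edge_prod[OF assms(3,4)] in \<open>auto simp: prod.case_distrib\<close>)
  finally show ?thesis .
qed

lemma card_F_ast:
  assumes "finite MG" "finite MH" "doubletons MG" "doubletons MH"
  shows "card (F_ast MG MH) = 2 * card MG * card MH"
proof -
  have "card (F_ast MG MH) = (\<Sum>(e, f)\<in>MG \<times> MH. card {x\<in>edge_prod e f. True})"
    using card_F_ast_filter[OF assms, of "\<lambda>_. True"] by simp
  also have "\<dots> = (\<Sum>(e, f)\<in>MG \<times> MH. 2)"
  proof (intro sum.cong refl, clarify)
    fix e f assume "e \<in> MG" "f \<in> MH"
    then obtain a b c d where "e = {a, b}" "a \<noteq> b" "f = {c, d}" "c \<noteq> d"
      using assms(3,4) by (meson doubletonsE)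
    then show "card {x\<in>edge_prod e f. True} = 2" by (simp add: card_edge_prod)
  qed
  finally show ?thesis by (simp add: card_cartesian_product)
qed

lemma degree_F_ast:
  assumes "finite MG" "finite MH" "doubletons MG" "doubletons MH"
  shows "degree (F_ast MG MH) (g, h) = degree MG g * degree MH h"
proof -
  have "degree (F_ast MG MH) (g, h) = (\<Sum>(e, f)\<in>MG \<times> MH. card {x\<in>edge_prod e f. (g, h) \<in> x})"
    unfolding degree_def by (rule card_F_ast_filter[OF assms])
  also have "\<dots> = (\<Sum>(e, f)\<in>MG \<times> MH. if g \<in> e \<and> h \<in> f then 1 else 0)"
  proof (intro sum.cong refl, clarify)
    fix e f assume ef: "e \<in> MG" "f \<in> MH"
    show "card {x\<in>edge_prod e f. (g, h) \<in> x} = (if g \<in> e \<and> h \<in> f then 1 else 0)"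
    proof (cases "g \<in> e \<and> h \<in> f")
      case True
      then obtain a c where "e = {g, a}" "g \<noteq> a" "f = {h, c}" "h \<noteq> c"
        using ef assms(3,4) by (meson doubletons_other_endpoint)
      then show ?thesis using True by (simp add: card_edge_prod_containing)
    next
      case False
      then have none: "{x\<in>edge_prod e f. (g, h) \<in> x} = {}" by (auto dest: edge_prod_member)
      show ?thesis unfolding none using False by simp
    qed
  qed
  also have "\<dots> = card {i\<in>MG \<times> MH. g \<in> fst i \<and> h \<in> snd i}"
    using assms(1,2) by (simp only: card_eq_sum sum.inter_filter finite_cartesian_product split_def)
  also have "{i\<in>MG \<times> MH. g \<in> fst i \<and> h \<in> snd i} = {e\<in>MG. g \<in> e} \<times> {f\<in>MH. h \<in> f}"
    by auto
  finally show ?thesis by (simp add: degree_def card_cartesian_product)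
qed

lemma graph_edge_vertices: "graph V E \<Longrightarrow> {a, b} \<in> E \<Longrightarrow> a \<in> V \<and> b \<in> V"
  unfolding graph_def by (auto simp: doubleton_eq_iff)

lemma graph_finite_edges: "graph V E \<Longrightarrow> finite E"
  unfolding graph_def by (rule finite_subset[of _ "Pow V"]) auto

lemma graph_edge_subset:
  assumes "graph V E" "M \<subseteq> E"
  shows "finite M" "doubletons M"
  using assms finite_subset[OF _ graph_finite_edges] unfolding graph_def doubletons_def by blast+

lemma finite_prod_edges:
  assumes "graph VG EG" "graph VH EH"
  shows "finite (prod_edges p VG EG VH EH)"
proof (rule finite_subset)
  show "prod_edges p VG EG VH EH \<subseteq> Pow (VG \<times> VH)"
    unfolding prod_edges_def by auto
  show "finite (Pow (VG \<times> VH))"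
    using assms unfolding graph_def by simp
qed

lemma F_ast_subset_prod_edges:
  assumes "graph VG EG" "graph VH EH" "MG \<subseteq> EG" "MH \<subseteq> EH"
  shows "F_ast MG MH \<subseteq> prod_edges p VG EG VH EH"
proof
  fix x assume "x \<in> F_ast MG MH"
  then obtain g g' h h' where x: "x = {(g, h), (g', h')}" and e: "{g, g'} \<in> EG" "{h, h'} \<in> EH"
    using assms(3,4) unfolding F_ast_def by blast
  moreover have "g \<in> VG" "g' \<in> VG" "h \<in> VH" "h' \<in> VH"
    using e assms(1,2) by (auto dest: graph_edge_vertices)
  ultimately show "x \<in> prod_edges p VG EG VH EH"
    unfolding prod_edges_def x
    by (intro CollectI exI[of _ g] exI[of _ g'] exI[of _ h] exI[of _ h']) (cases p; simp)
qed

lemma F_ast_k_matching: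
  assumes "graph VG EG" "graph VH EH" "k_matching VG EG kG MG" "k_matching VH EH kH MH"
  shows "k_matching (VG \<times> VH) (prod_edges p VG EG VH EH) (kG * kH) (F_ast MG MH)"
proof -
  have sub: "MG \<subseteq> EG" "MH \<subseteq> EH" using assms(3,4) by (simp_all add: k_matching_def)
  note G = graph_edge_subset[OF assms(1) sub(1)] and H = graph_edge_subset[OF assms(2) sub(2)]
  have "degree (F_ast MG MH) (g, h) = 0 \<or> degree (F_ast MG MH) (g, h) = kG * kH"
    if "g \<in> VG" "h \<in> VH" for g h
    using assms(3,4) that by (auto simp: degree_F_ast[OF G(1) H(1) G(2) H(2)] k_matching_iff_degree)
  then show ?thesis
    using F_ast_subset_prod_edges[OF assms(1,2) sub] by (auto simp: k_matching_iff_degree)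
qed

lemma exists_vertex_positive_degree:
  assumes "graph V E" "M \<subseteq> E" "M \<noteq> {}"
  obtains v where "v \<in> V" "degree M v > 0"
proof -
  obtain e where e: "e \<in> M" using assms(3) by blast
  then obtain a b where ab: "e = {a, b}" "a \<noteq> b"
    using graph_edge_subset(2)[OF assms(1,2)] by (meson doubletonsE)
  have "a \<in> V" using graph_edge_vertices[OF assms(1)] assms(2) e ab by blast
  moreover have "degree M a > 0"
    unfolding degree_def using graph_edge_subset(1)[OF assms(1,2)] e ab by (auto simp: card_gt_0_iff)
  ultimately show thesis by (rule that)
qed

text \<open>A vertex of positive degree in one factor pins down the common non-zero degree in the other,
  because the products of degrees only take the values 0 and k.\<close>
lemma k_matching_factors:
  assumes "graph VG EG" "graph VH EH" "MG \<subseteq> EG" "MH \<subseteq> EH" "MG \<noteq> {}" "MH \<noteq> {}"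
    and "k_matching (VG \<times> VH) (prod_edges p VG EG VH EH) k (F_ast MG MH)"
  obtains kG kH where "kG > 0" "kH > 0" "kG * kH = k"
    "k_matching VG EG kG MG" "k_matching VH EH kH MH"
proof -
  note G = graph_edge_subset[OF assms(1,3)] and H = graph_edge_subset[OF assms(2,4)]
  have prod_degree: "degree MG g * degree MH h \<in> {0, k}" if "g \<in> VG" "h \<in> VH" for g h
    using assms(7) that by (auto simp: k_matching_iff_degree degree_F_ast[OF G(1) H(1) G(2) H(2), symmetric])
  obtain g0 where g0: "g0 \<in> VG" "degree MG g0 > 0"
    using exists_vertex_positive_degree[OF assms(1,3,5)] .
  obtain h0 where h0: "h0 \<in> VH" "degree MH h0 > 0"
    using exists_vertex_positive_degree[OF assms(2,4,6)] .
  have k: "degree MG g0 * degree MH h0 = k"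
    using prod_degree[OF g0(1) h0(1)] g0(2) h0(2) by auto
  show thesis
  proof (rule that[OF g0(2) h0(2) k])
    show "k_matching VG EG (degree MG g0) MG"
      using prod_degree[OF _ h0(1)] h0(2) assms(3) by (auto simp: k_matching_iff_degree k[symmetric])
    show "k_matching VH EH (degree MH h0) MH"
      using prod_degree[OF g0(1)] g0(2) assms(4) by (auto simp: k_matching_iff_degree k[symmetric])
  qed
qed

lemma finite_k_matchings: "finite E \<Longrightarrow> finite {M. k_matching V E k M}"
  unfolding k_matching_def by (rule finite_subset[of _ "Pow E"]) auto

lemma card_le_m_k: "finite E \<Longrightarrow> k_matching V E k M \<Longrightarrow> card M \<le> m_k V E k"
  unfolding m_k_def using finite_k_matchings by (intro Max_ge) auto

lemma m_k_attained:
  assumes "finite E"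
  obtains M where "k_matching V E k M" "card M = m_k V E k"
proof -
  have "k_matching V E k {}" by (simp add: k_matching_def)
  then have "m_k V E k \<in> card ` {M. k_matching V E k M}"
    unfolding m_k_def using finite_k_matchings[OF assms] by (intro Max_in) auto
  then show thesis using that by auto
qed

lemma F_ast_of_maximum_k_matchings:
  assumes "graph VG EG" "graph VH EH"
  obtains MG MH where "MG \<subseteq> EG" "MH \<subseteq> EH"
    "k_matching (VG \<times> VH) (prod_edges p VG EG VH EH) (kG * kH) (F_ast MG MH)"
    "card (F_ast MG MH) = 2 * m_k VG EG kG * m_k VH EH kH"
proof -
  obtain MG where MG: "k_matching VG EG kG MG" "card MG = m_k VG EG kG"
    using m_k_attained[OF graph_finite_edges[OF assms(1)]] .
  obtain MH where MH: "k_matching VH EH kH MH" "card MH = m_k VH EH kH"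
    using m_k_attained[OF graph_finite_edges[OF assms(2)]] .
  have sub: "MG \<subseteq> EG" "MH \<subseteq> EH" using MG(1) MH(1) by (simp_all add: k_matching_def)
  note G = graph_edge_subset[OF assms(1) sub(1)] and H = graph_edge_subset[OF assms(2) sub(2)]
  show thesis
    using that[OF sub F_ast_k_matching[OF assms MG(1) MH(1)]]
    by (simp add: card_F_ast[OF G(1) H(1) G(2) H(2)] MG(2) MH(2))
qed

lemma m_k_prod_ge:
  assumes "graph VG EG" "graph VH EH"
  shows "2 * m_k VG EG kG * m_k VH EH kH \<le> m_k (VG \<times> VH) (prod_edges p VG EG VH EH) (kG * kH)"
  using F_ast_of_maximum_k_matchings[OF assms]
  by (metis card_le_m_k finite_prod_edges[OF assms])

lemma factorization_if_well_behaved: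
  assumes "k > 0" "graph VG EG" "graph VH EH" "well_behaved p k VG EG VH EH"
  obtains kG kH where "kG > 0" "kH > 0" "kG * kH = k"
    "m_k (VG \<times> VH) (prod_edges p VG EG VH EH) k = 2 * m_k VG EG kG * m_k VH EH kH"
proof -
  let ?m = "m_k (VG \<times> VH) (prod_edges p VG EG VH EH) k"
  obtain MG MH where sub: "MG \<subseteq> EG" "MH \<subseteq> EH"
    and F: "k_matching (VG \<times> VH) (prod_edges p VG EG VH EH) k (F_ast MG MH)" "?m = card (F_ast MG MH)"
    using assms(4) unfolding well_behaved_def by blast
  show thesis
  proof (cases "MG = {} \<or> MH = {}")
    case True
    then have "?m = 0" using F(2) by (auto simp: F_ast_def)
    \<comment> \<open>the lower bound then squeezes the right-hand side for k = k * 1 to 0 as well\<close>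
    then show thesis using that[of k 1] m_k_prod_ge[OF assms(2,3), of k 1 p] assms(1) by simp
  next
    case False
    then obtain kG kH where kk: "kG > 0" "kH > 0" "kG * kH = k"
      and M: "k_matching VG EG kG MG" "k_matching VH EH kH MH"
      using k_matching_factors[OF assms(2,3) sub _ _ F(1)] by blast
    note G = graph_edge_subset[OF assms(2) sub(1)] and H = graph_edge_subset[OF assms(3) sub(2)]
    have "?m = 2 * card MG * card MH" using F(2) card_F_ast[OF G(1) H(1) G(2) H(2)] by simp
    also have "\<dots> \<le> 2 * m_k VG EG kG * m_k VH EH kH"
      using card_le_m_k[OF graph_finite_edges M(1)] card_le_m_k[OF graph_finite_edges M(2)] assms(2,3)
      by (simp add: mult_le_mono)
    finally show thesis using that[OF kk] m_k_prod_ge[OF assms(2,3), of kG kH p] kk(3) by simp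
  qed
qed

theorem mainTheorem13:
  fixes p :: prod_kind and k :: nat
    and VG :: "'a set" and EG :: "'a set set" and VH :: "'b set" and EH :: "'b set set"
  assumes "k > 0" and "graph VG EG" and "graph VH EH"
  shows "well_behaved p k VG EG VH EH \<longleftrightarrow>
    (\<exists>kG kH. kG > 0 \<and> kH > 0 \<and> kG * kH = k \<and>
       m_k (VG \<times> VH) (prod_edges p VG EG VH EH) k = 2 * m_k VG EG kG * m_k VH EH kH)"
proof
  assume "well_behaved p k VG EG VH EH"
  then show "\<exists>kG kH. kG > 0 \<and> kH > 0 \<and> kG * kH = k \<and>
      m_k (VG \<times> VH) (prod_edges p VG EG VH EH) k = 2 * m_k VG EG kG * m_k VH EH kH"
    using factorization_if_well_behaved[OF assms] by metis
next
  assume "\<exists>kG kH. kG > 0 \<and> kH > 0 \<and> kG * kH = k \<and>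
      m_k (VG \<times> VH) (prod_edges p VG EG VH EH) k = 2 * m_k VG EG kG * m_k VH EH kH"
  then obtain kG kH where "kG * kH = k"
    "m_k (VG \<times> VH) (prod_edges p VG EG VH EH) k = 2 * m_k VG EG kG * m_k VH EH kH"
    by blast
  then show "well_behaved p k VG EG VH EH"
    using F_ast_of_maximum_k_matchings[OF assms(2,3), of p kG kH]
    unfolding well_behaved_def by metis
qed

end
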